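(* Let $p$ be a prime. Then $\mathcal{M}_p^{(0)}\subseteq\{1,2,6,42,1806\}$.
   Context: For positive integers $k,n$ let $S_k(n)=\sum_{i=1}^{n} i^k$. For an integer $a$, $\mathcal{M}_a$ denotes the set of positive integers $n$ such that $S_n(n)\equiv a\pmod{n}$. For a prime $p$, $\mathcal{M}_p^{(0)}=\{n\in\mathcal{M}_p : p\nmid n\}$. *)

theory Defs
  imports Main "HOL-Number_Theory.Cong"
begin

definition S :: "nat \<Rightarrow> nat \<Rightarrow> int" where
  "S k n = (\<Sum>i=1..n. (int i) ^ k)"

definition M :: "int \<Rightarrow> nat set" where
  "M a = {n. n > 0 \<and> [S n n = a] (mod (int n))}"

definition M0 :: "nat \<Rightarrow> nat set" where
  "M0 p = {n \<in> M (int p). \<not> p dvd n}"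

end

theory Submission
  imports Defs "HOL-Number_Theory.Number_Theory" "HOL-Computational_Algebra.Squarefree"
begin

text \<open>
  If \<open>q\<close> is a prime factor of \<open>n = q * m\<close>, then \<open>S n n \<equiv> m * S n q (mod q)\<close>, and
  \<open>S n q \<equiv> 0 (mod q)\<close> unless \<open>q - 1 dvd n\<close>, because the nonzero residues form a cyclic
  group of order \<open>q - 1\<close>. For \<open>n \<in> M0 p\<close> we have \<open>S n n \<equiv> p (mod q)\<close> with \<open>q \<noteq> p\<close>, so
  \<open>q\<close> divides neither \<open>m\<close> nor \<open>S n q\<close>: \<open>n\<close> is squarefree and \<open>q - 1 dvd n\<close> for each prime
  \<open>q dvd n\<close>. By strong induction every such \<open>q\<close> is one of \<open>2, 3, 7, 43\<close>, since \<open>q - 1\<close> is a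
  product of smaller ones; among the products of subsets of \<open>{2, 3, 7, 43}\<close> the condition
  leaves only \<open>1, 2, 6, 42, 1806\<close>.
\<close>

lemma geometric_sum_cong_0:
  fixes x q :: int
  assumes "prime q" "[x ^ n = 1] (mod q)" "\<not> [x = 1] (mod q)"
  shows "[(\<Sum>i<n. x ^ i) = 0] (mod q)"
proof -
  have "q dvd (x - 1) * (\<Sum>i<n. x ^ i)"
    using assms(2) by (simp add: cong_iff_dvd_diff power_diff_1_eq)
  moreover have "\<not> q dvd x - 1"
    using assms(3) by (simp add: cong_iff_dvd_diff)
  ultimately show ?thesis
    using assms(1) by (simp add: cong_0_iff prime_dvd_mult_iff)
qed

lemma sum_nonzero_residues_power_cong_0:
  assumes q: "prime q" and k: "\<not> (q - 1) dvd k"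
  shows "[(\<Sum>i\<in>{0<..<q}. int i ^ k) = 0] (mod int q)"
proof -
  have q1: "q > 1"
    using q by (rule prime_gt_1_nat)
  obtain g where g: "residue_primroot q g"
    using prime_primitive_root_exists[OF q1 q] by blast
  have ord: "ord q g = q - 1"
    using q g by (simp add: residue_primroot_def totient_prime)
  have "bij_betw (\<lambda>i. g ^ i mod q) {..<q - 1} {0<..<q}"
    using residue_primroot_is_generator[OF q1 g] q by (simp add: totient_prime totatives_prime)
  from sum.reindex_bij_betw[OF this, of "\<lambda>i. int i ^ k"]
  have "(\<Sum>i\<in>{0<..<q}. int i ^ k) = (\<Sum>i<q - 1. int (g ^ i mod q) ^ k)"
    by simp
  also have "[\<dots> = (\<Sum>i<q - 1. (int g ^ k) ^ i)] (mod int q)"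
  proof (rule cong_sum)
    fix i
    have "[int (g ^ i mod q) = int g ^ i] (mod int q)"
      by (simp add: of_nat_mod cong_def)
    then have "[int (g ^ i mod q) ^ k = (int g ^ i) ^ k] (mod int q)"
      by (rule cong_pow)
    then show "[int (g ^ i mod q) ^ k = (int g ^ k) ^ i] (mod int q)"
      by (simp add: mult.commute flip: power_mult)
  qed
  also have "[(\<Sum>i<q - 1. (int g ^ k) ^ i) = 0] (mod int q)"
  proof (rule geometric_sum_cong_0)
    have "[(g ^ k) ^ (q - 1) = 1] (mod q)"
      unfolding power_mult[symmetric] ord_divides ord by simp
    then show "[(int g ^ k) ^ (q - 1) = 1] (mod int q)"
      by (metis cong_int_iff of_nat_1 of_nat_power)
    have "\<not> [g ^ k = 1] (mod q)"
      unfolding ord_divides ord using k .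
    then show "\<not> [int g ^ k = 1] (mod int q)"
      by (metis cong_int_iff of_nat_1 of_nat_power)
  qed (use q in simp)
  finally show ?thesis .
qed

lemma S_prime_cong_0:
  assumes "prime q" "k > 0" "\<not> (q - 1) dvd k"
  shows "[S k q = 0] (mod int q)"
proof -
  have "{1..q} = insert q {0<..<q}"
    using prime_gt_0_nat[OF assms(1)] by auto
  then have "S k q = int q ^ k + (\<Sum>i\<in>{0<..<q}. int i ^ k)"
    by (simp add: S_def)
  moreover have "[int q ^ k = 0] (mod int q)"
    using assms(2) by (simp add: cong_0_iff)
  ultimately show ?thesis
    using sum_nonzero_residues_power_cong_0[OF assms(1,3)] cong_add by fastforce
qed

lemma S_mult_cong: "[S k (q * m) = int m * S k q] (mod int q)"
proof (induction m)
  case (Suc m)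
  have "S k (q * Suc m) = S k (q * m) + (\<Sum>i=1+q*m..q+q*m. int i ^ k)"
    unfolding S_def using sum.ub_add_nat[of 1 "q * m" "\<lambda>i. int i ^ k" q]
    by (simp add: add.commute)
  also have "(\<Sum>i=1+q*m..q+q*m. int i ^ k) = (\<Sum>i=1..q. int (i + q * m) ^ k)"
    by (rule sum.shift_bounds_cl_nat_ivl)
  finally have split: "S k (q * Suc m) = S k (q * m) + (\<Sum>i=1..q. int (i + q * m) ^ k)" .
  have "[(\<Sum>i=1..q. int (i + q * m) ^ k) = S k q] (mod int q)"
    unfolding S_def by (intro cong_sum cong_pow) (simp add: cong_def)
  then have "[S k (q * Suc m) = int m * S k q + S k q] (mod int q)"
    unfolding split using Suc.IH by (rule cong_add[rotated])
  then show ?case by (simp add: algebra_simps)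
qed (simp add: S_def)

lemma M0_not_dvd_cofactor_mult_S:
  assumes p: "prime p" and n: "n \<in> M0 p" and q: "prime q" and m: "n = q * m"
  shows "\<not> int q dvd int m * S n q"
proof
  assume dvd: "int q dvd int m * S n q"
  have "[S n n = int p] (mod int n)"
    using n by (simp add: M0_def M_def)
  then have "[S n n = int p] (mod int q)"
    using m cong_dvd_modulus by fastforce
  moreover have "[S n n = 0] (mod int q)"
    using S_mult_cong[of n q m] dvd m by (simp add: cong_0_iff cong_dvd_iff)
  ultimately have "q dvd p"
    by (metis cong_0_iff cong_sym cong_trans of_nat_dvd_iff)
  then have "q = p"
    using p q by (simp add: primes_dvd_imp_eq)
  then show False
    using n m by (simp add: M0_def)
qed

lemma M0_squarefree:
  assumes "prime p" "n \<in> M0 p"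
  shows "squarefree n"
proof -
  have "n \<noteq> 0"
    using assms(2) by (simp add: M0_def M_def)
  moreover have "\<not> q ^ 2 dvd n" if q: "prime q" for q
  proof
    assume "q ^ 2 dvd n"
    then obtain m where "n = q * (q * m)"
      by (metis dvdE mult.assoc power2_eq_square)
    with M0_not_dvd_cofactor_mult_S[OF assms q] show False
      by (metis dvd_mult2 dvd_triv_left of_nat_mult)
  qed
  ultimately show ?thesis
    by (simp add: squarefree_factorial_semiring)
qed

lemma M0_prime_divisor_pred_dvd:
  assumes "prime p" "n \<in> M0 p" "prime q" "q dvd n"
  shows "(q - 1) dvd n"
proof (rule ccontr)
  assume "\<not> (q - 1) dvd n"
  moreover have "n > 0"
    using assms(2) by (simp add: M0_def M_def)
  ultimately have "int q dvd S n q"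
    using S_prime_cong_0[OF assms(3)] by (simp add: cong_0_iff)
  moreover obtain m where "n = q * m"
    using assms(4) by blast
  ultimately show False
    using M0_not_dvd_cofactor_mult_S[OF assms(1,2,3)] by auto
qed

lemma squarefree_eq_Prod_prime_factors:
  assumes "squarefree (n::nat)"
  shows "n = \<Prod>(prime_factors n)"
proof -
  have n0: "n > 0"
    using assms by (auto intro: Nat.gr0I)
  have "n = (\<Prod>q\<in>prime_factors n. q ^ multiplicity q n)"
    using prime_factorization_nat[OF n0] .
  also have "\<dots> = \<Prod>(prime_factors n)"
    using assms n0 by (intro prod.cong) (auto simp: squarefree_factorial_semiring')
  finally show ?thesis .
qed

lemma squarefree_in_Prod_Pow:
  assumes "squarefree (n::nat)" "prime_factors n \<subseteq> P"
  shows "n \<in> Prod ` Pow P"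
  using squarefree_eq_Prod_prime_factors[OF assms(1)] assms(2) by blast

lemma Prod_Pow_2_3_7_43:
  "Prod ` Pow {2, 3, 7, 43::nat} = {1, 2, 3, 6, 7, 14, 21, 42, 43, 86, 129, 258, 301, 602, 903, 1806}"
  by (simp add: Pow_insert insert_commute)

lemma prime_pred_in_Prod_Pow_2_3_7_43:
  assumes "prime (q::nat)" "q - 1 \<in> Prod ` Pow {2, 3, 7, 43}"
  shows "q \<in> {2, 3, 7, 43}"
proof -
  have "q - 1 + 1 \<in> {2, 3, 7, 43, 4, 8, 15, 22, 44, 87, 130, 259, 302, 603, 904, 1807}"
    using assms(2) unfolding Prod_Pow_2_3_7_43 by auto
  then have "q \<in> {2, 3, 7, 43, 4, 8, 15, 22, 44, 87, 130, 259, 302, 603, 904, 1807}"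
    using prime_gt_1_nat[OF assms(1)] by simp
  moreover have "\<not> prime q" if "q \<in> {4, 8, 15, 22, 44, 87, 130, 259, 302, 603, 904, 1807}"
    using that unfolding prime_nat_iff
    by (auto intro: exI[of _ 2] exI[of _ 3] exI[of _ 7] exI[of _ 13])
  ultimately show ?thesis
    using assms(1) by blast
qed

lemma prime_factors_subset_2_3_7_43:
  assumes sf: "squarefree (n::nat)" and pred: "\<And>q. prime q \<Longrightarrow> q dvd n \<Longrightarrow> (q - 1) dvd n"
  shows "prime q \<Longrightarrow> q dvd n \<Longrightarrow> q \<in> {2, 3, 7, 43}"
proof (induction q rule: less_induct)
  case (less q)
  have "q - 1 dvd n"
    using pred less.prems by blast
  moreover have "r \<in> {2, 3, 7, 43}" if "prime r" "r dvd q - 1" for r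
  proof (rule less.IH)
    show "r < q"
      using that prime_gt_1_nat[OF less.prems(1)] by (auto dest: dvd_imp_le)
    show "r dvd n"
      using that(2) \<open>q - 1 dvd n\<close> by (rule dvd_trans)
  qed (fact that(1))
  ultimately have "q - 1 \<in> Prod ` Pow {2, 3, 7, 43}"
    using squarefree_mono[OF _ sf] by (intro squarefree_in_Prod_Pow) (auto simp: prime_factors_dvd)
  then show ?case
    using less.prems(1) by (rule prime_pred_in_Prod_Pow_2_3_7_43[rotated])
qed

lemma squarefree_pred_dvd_classification:
  assumes sf: "squarefree (n::nat)" and pred: "\<And>q. prime q \<Longrightarrow> q dvd n \<Longrightarrow> (q - 1) dvd n"
  shows "n \<in> {1, 2, 6, 42, 1806}"
proof -
  have "prime (3::nat)" "prime (7::nat)" "prime (43::nat)"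
    by code_simp+
  then have "3 dvd n \<Longrightarrow> 2 dvd n" "7 dvd n \<Longrightarrow> 6 dvd n" "43 dvd n \<Longrightarrow> 42 dvd n"
    using pred[of 3] pred[of 7] pred[of 43] by simp_all
  moreover have "n \<in> Prod ` Pow {2, 3, 7, 43}"
    using prime_factors_subset_2_3_7_43[OF sf pred]
    by (intro squarefree_in_Prod_Pow[OF sf]) (auto simp: prime_factors_dvd)
  ultimately show ?thesis
    unfolding Prod_Pow_2_3_7_43 by (elim insertE emptyE) simp_all
qed

theorem mainTheorem2:
  fixes p :: nat
  assumes "prime p"
  shows "M0 p \<subseteq> {1, 2, 6, 42, 1806}"
proof
  fix n
  assume n: "n \<in> M0 p"
  show "n \<in> {1, 2, 6, 42, 1806}"
    using M0_squarefree[OF assms n] M0_prime_divisor_pred_dvd[OF assms n]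
    by (rule squarefree_pred_dvd_classification)
qed

end
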